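(* For all $n\in\mathbb{N}$ and $\ell\ge1$ there is a constant $c_{n,\ell}>0$ such that for any two convex sets $X,Y\subset\mathbb{R}^n$ of equal volume with $B(o,1/\ell)\subset X,Y\subset B(o,\ell)$, $$|X\triangle Y|\le c_{n,\ell}\int_{\partial X}d(x,Y)\,d\mathcal H^{n-1}(x).$$
   Context: $o$ is the origin, $B(p,r)$ the open Euclidean ball, $|\cdot|$ Lebesgue measure, $\mathcal H^{n-1}$ the $(n-1)$-dimensional Hausdorff measure, and $d(x,Y)=\inf_{y\in Y}\|x-y\|_2$. *)

theory Defs
  imports "HOL-Analysis.Analysis"
begin

definition hausdorff_pre :: "nat \<Rightarrow> real \<Rightarrow> 'a::metric_space set \<Rightarrow> ennreal" where
  "hausdorff_pre s \<delta> A =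
     (INF C \<in> {C :: nat \<Rightarrow> 'a set. A \<subseteq> (\<Union>i. C i) \<and>
                 (\<forall>i. bounded (C i) \<and> diameter (C i) \<le> \<delta>)}.
        (\<Sum>i. ennreal (if C i = {} then 0
                        else unit_ball_vol (real s) * (diameter (C i) / 2) ^ s)))"

definition hausdorff_outer :: "nat \<Rightarrow> 'a::metric_space set \<Rightarrow> ennreal" where
  "hausdorff_outer s A = (SUP \<delta> \<in> {0<..}. hausdorff_pre s \<delta> A)"

definition hausdorff_measure :: "nat \<Rightarrow> 'a::metric_space measure" where
  "hausdorff_measure s =
     measure_of UNIV (lambda_system UNIV UNIV (hausdorff_outer s)) (hausdorff_outer s)"

end

theory Submission
  imports Defs
begin

text \<open>
  As \<open>|X| = |Y|\<close>, we have \<open>|X \<triangle> Y| = 2 |X - Y|\<close>. A point of \<open>X - Y\<close> has the form \<open>t x\<close>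
  with \<open>x \<in> \<partial>X\<close> and \<open>0 < t \<le> 1\<close>, and since \<open>Y\<close> is convex and contains \<open>B(0, 1/l)\<close>,
  \<open>1 - t \<le> l d(x, Y)\<close>. Sorting the boundary points into the bands
  \<open>S\<^sub>k = {x \<in> \<partial>X. l 2\<^sup>-\<^sup>k\<^sup>-\<^sup>1 < d(x, Y) \<le> l 2\<^sup>-\<^sup>k}\<close>, the set \<open>X - Y\<close> is covered, up to the
  null set \<open>\<partial>X\<close>, by the radial shells \<open>{t x. x \<in> S\<^sub>k, 1 - l\<^sup>2 2\<^sup>-\<^sup>k \<le> t \<le> 1}\<close>. A shell of
  relative depth \<open>h\<close> over a set of diameter \<open>\<rho> \<le> h\<close> is covered by about \<open>l h / \<rho>\<close> balls of
  radius \<open>2 \<rho>\<close>, so its volume is \<open>O(l h \<rho>\<^sup>n\<^sup>-\<^sup>1)\<close>; covering \<open>S\<^sub>k\<close> by small sets gives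
  \<open>O(l\<^sup>3 2\<^sup>-\<^sup>k H\<^sup>n\<^sup>-\<^sup>1(S\<^sub>k))\<close> for the \<open>k\<close>-th shell, and summing over \<open>k\<close> bounds
  \<open>|X - Y|\<close> by \<open>O(l\<^sup>2) \<integral>\<^bsub>\<partial>X\<^esub> d(x, Y)\<close>.

  The Hausdorff measure is given by the Carath\'eodory construction, so the bands \<open>S\<^sub>k\<close> have to
  be shown measurable; this holds because the Hausdorff outer measure is a metric outer measure.
\<close>

lemma suminf_ennreal_half_powers:
  assumes "0 \<le> e"
  shows "(\<Sum>n. ennreal (e * (1/2)^Suc n)) = ennreal e"
proof -
  have "(\<lambda>n. e * (1/2)^Suc n) sums e"
    using sums_mult[OF geometric_sums[of "1/2::real"], of "e/2"] by (simp add: field_simps)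
  then show ?thesis
    using assms by (subst suminf_ennreal2) (auto simp: sums_iff)
qed

lemma ennreal_suminf_tail_le:
  assumes "suminf (f :: nat \<Rightarrow> ennreal) < top" "0 < e"
  shows "\<exists>j. (\<Sum>i. f (i + j)) \<le> ennreal e"
proof -
  define r where "r i = enn2real (f i)" for i
  have f_eq: "f i = ennreal (r i)" for i
    using ennreal_suminf_lessD[OF assms(1)] by (simp add: r_def less_top)
  have r_nonneg: "0 \<le> r i" for i
    by (simp add: r_def)
  have "summable r"
    using assms(1) by (intro summable_suminf_not_top) (auto simp: r_nonneg f_eq[abs_def])
  from suminf_exist_split[OF assms(2) this]
  obtain N where N: "\<And>n. n \<ge> N \<Longrightarrow> norm (\<Sum>i. r (i + n)) < e"
    by blast
  have "(\<Sum>i. f (i + N)) = ennreal (\<Sum>i. r (i + N))"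
    unfolding f_eq using \<open>summable r\<close> r_nonneg
    by (subst suminf_ennreal2) (auto simp: summable_iff_shift)
  also have "\<dots> \<le> ennreal e"
    using N[of N] by (intro ennreal_leI) auto
  finally show ?thesis
    by blast
qed

section \<open>Hausdorff measure\<close>

definition hausdorff_weight :: "nat \<Rightarrow> 'a::metric_space set \<Rightarrow> ennreal" where
  "hausdorff_weight s C =
     ennreal (if C = {} then 0 else unit_ball_vol (real s) * (diameter C / 2) ^ s)"

definition hausdorff_covers :: "real \<Rightarrow> 'a::metric_space set \<Rightarrow> (nat \<Rightarrow> 'a set) set" where
  "hausdorff_covers \<delta> A =
     {C. A \<subseteq> (\<Union>i. C i) \<and> (\<forall>i. bounded (C i) \<and> diameter (C i) \<le> \<delta>)}"

lemma hausdorff_weight_empty [simp]: "hausdorff_weight s {} = 0"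
  by (simp add: hausdorff_weight_def)

lemma hausdorff_pre_eq_INF_covers:
  "hausdorff_pre s \<delta> A = (INF C \<in> hausdorff_covers \<delta> A. \<Sum>i. hausdorff_weight s (C i))"
  unfolding hausdorff_pre_def hausdorff_covers_def hausdorff_weight_def by simp

lemma hausdorff_pre_le_cover:
  "C \<in> hausdorff_covers \<delta> A \<Longrightarrow> hausdorff_pre s \<delta> A \<le> (\<Sum>i. hausdorff_weight s (C i))"
  unfolding hausdorff_pre_eq_INF_covers by (rule INF_lower)

lemma hausdorff_pre_greatest:
  "(\<And>C. C \<in> hausdorff_covers \<delta> A \<Longrightarrow> c \<le> (\<Sum>i. hausdorff_weight s (C i)))
    \<Longrightarrow> c \<le> hausdorff_pre s \<delta> A"
  unfolding hausdorff_pre_eq_INF_covers by (rule INF_greatest)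

lemma hausdorff_pre_cover_approx:
  assumes "hausdorff_pre s \<delta> A < top" "0 < e"
  shows "\<exists>C\<in>hausdorff_covers \<delta> A.
           (\<Sum>i. hausdorff_weight s (C i)) < hausdorff_pre s \<delta> A + e"
proof -
  have "hausdorff_pre s \<delta> A < hausdorff_pre s \<delta> A + e"
    using assms by (simp add: ennreal_add_left_cancel_less)
  then show ?thesis
    unfolding hausdorff_pre_eq_INF_covers INF_less_iff[symmetric] by simp
qed

lemma hausdorff_pre_mono: "A \<subseteq> B \<Longrightarrow> hausdorff_pre s \<delta> A \<le> hausdorff_pre s \<delta> B"
  by (rule hausdorff_pre_greatest, rule hausdorff_pre_le_cover)
     (auto simp: hausdorff_covers_def intro: order_trans)

lemma hausdorff_pre_antimono: "\<delta> \<le> \<delta>' \<Longrightarrow> hausdorff_pre s \<delta>' A \<le> hausdorff_pre s \<delta> A"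
  by (rule hausdorff_pre_greatest, rule hausdorff_pre_le_cover)
     (auto simp: hausdorff_covers_def intro: order_trans)

lemma hausdorff_pre_empty: "0 < \<delta> \<Longrightarrow> hausdorff_pre s \<delta> {} = 0"
  using hausdorff_pre_le_cover[of "\<lambda>_. {}" \<delta> "{}" s] by (simp add: hausdorff_covers_def)

lemma hausdorff_pre_le_outer: "0 < \<delta> \<Longrightarrow> hausdorff_pre s \<delta> A \<le> hausdorff_outer s A"
  unfolding hausdorff_outer_def by (rule SUP_upper) auto

lemma hausdorff_outer_least:
  "(\<And>\<delta>. 0 < \<delta> \<Longrightarrow> hausdorff_pre s \<delta> A \<le> c) \<Longrightarrow> hausdorff_outer s A \<le> c"
  unfolding hausdorff_outer_def by (rule SUP_least) auto

lemma hausdorff_outer_empty [simp]: "hausdorff_outer s ({} :: 'a::metric_space set) = 0"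
  unfolding hausdorff_outer_def by (simp add: hausdorff_pre_empty)

lemma hausdorff_outer_mono: "A \<subseteq> B \<Longrightarrow> hausdorff_outer s A \<le> hausdorff_outer s B"
  by (meson hausdorff_pre_le_outer hausdorff_pre_mono hausdorff_outer_least order_trans)

lemma hausdorff_pre_countably_subadditive:
  fixes A :: "nat \<Rightarrow> 'a::metric_space set"
  shows "hausdorff_pre s \<delta> (\<Union>n. A n) \<le> (\<Sum>n. hausdorff_pre s \<delta> (A n))"
proof (rule ennreal_le_epsilon)
  fix e :: real
  assume fin: "(\<Sum>n. hausdorff_pre s \<delta> (A n)) < top" and e: "0 < e"
  have "\<exists>C. C \<in> hausdorff_covers \<delta> (A n) \<and>
          (\<Sum>i. hausdorff_weight s (C i)) < hausdorff_pre s \<delta> (A n) + ennreal (e * (1/2)^Suc n)"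
    for n
    using hausdorff_pre_cover_approx[OF ennreal_suminf_lessD[OF fin], of "ennreal (e * (1/2)^Suc n)"] e
    by auto
  then obtain C where C: "\<And>n. C n \<in> hausdorff_covers \<delta> (A n)"
    "\<And>n. (\<Sum>i. hausdorff_weight s (C n i)) < hausdorff_pre s \<delta> (A n) + ennreal (e * (1/2)^Suc n)"
    by metis
  define D where "D k = (case prod_decode k of (n, i) \<Rightarrow> C n i)" for k
  have "D \<in> hausdorff_covers \<delta> (\<Union>n. A n)"
  proof -
    have "A n \<subseteq> (\<Union>k. D k)" for n
    proof
      fix x
      assume "x \<in> A n"
      then obtain i where "x \<in> C n i"
        using C(1)[of n] by (auto simp: hausdorff_covers_def)
      then have "x \<in> D (prod_encode (n, i))"
        by (simp add: D_def)
      then show "x \<in> (\<Union>k. D k)"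
        by blast
    qed
    moreover have "bounded (D k) \<and> diameter (D k) \<le> \<delta>" for k
      using C(1) by (auto simp: D_def hausdorff_covers_def split: prod.splits)
    ultimately show ?thesis
      by (auto simp: hausdorff_covers_def)
  qed
  then have "hausdorff_pre s \<delta> (\<Union>n. A n) \<le> (\<Sum>k. hausdorff_weight s (D k))"
    by (rule hausdorff_pre_le_cover)
  also have "\<dots> = (\<Sum>n. \<Sum>i. hausdorff_weight s (C n i))"
    using suminf_ennreal_2dimen[of "\<lambda>n. \<Sum>i. hausdorff_weight s (C n i)"
        "\<lambda>(n, i). hausdorff_weight s (C n i)"]
    by (simp add: D_def case_prod_beta)
  also have "\<dots> \<le> (\<Sum>n. hausdorff_pre s \<delta> (A n) + ennreal (e * (1/2)^Suc n))"
    by (intro suminf_le summableI less_imp_le C(2))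
  also have "\<dots> = (\<Sum>n. hausdorff_pre s \<delta> (A n)) + (\<Sum>n. ennreal (e * (1/2)^Suc n))"
    by (rule suminf_add[symmetric]) (auto intro: summableI)
  also have "\<dots> = (\<Sum>n. hausdorff_pre s \<delta> (A n)) + ennreal e"
    using e by (simp only: suminf_ennreal_half_powers)
  finally show "hausdorff_pre s \<delta> (\<Union>n. A n) \<le> (\<Sum>n. hausdorff_pre s \<delta> (A n)) + ennreal e" .
qed

lemma hausdorff_outer_countably_subadditive:
  fixes A :: "nat \<Rightarrow> 'a::metric_space set"
  shows "hausdorff_outer s (\<Union>n. A n) \<le> (\<Sum>n. hausdorff_outer s (A n))"
proof (rule hausdorff_outer_least)
  fix \<delta> :: real
  assume "0 < \<delta>"
  have "hausdorff_pre s \<delta> (\<Union>n. A n) \<le> (\<Sum>n. hausdorff_pre s \<delta> (A n))"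
    by (rule hausdorff_pre_countably_subadditive)
  also have "\<dots> \<le> (\<Sum>n. hausdorff_outer s (A n))"
    by (intro suminf_le summableI hausdorff_pre_le_outer \<open>0 < \<delta>\<close>)
  finally show "hausdorff_pre s \<delta> (\<Union>n. A n) \<le> (\<Sum>n. hausdorff_outer s (A n))" .
qed

lemma hausdorff_outer_subadditive:
  "hausdorff_outer s (A \<union> B) \<le> hausdorff_outer s A + hausdorff_outer s B"
proof -
  define P where "P n = (if n = 0 then A else if n = 1 then B else {})" for n :: nat
  have "A \<union> B = (\<Union>n. P n)"
    by (auto simp: P_def split: if_splits)
  then have "hausdorff_outer s (A \<union> B) \<le> (\<Sum>n. hausdorff_outer s (P n))"
    using hausdorff_outer_countably_subadditive by metis
  also have "\<dots> = (\<Sum>n<2. hausdorff_outer s (P n))"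
    by (rule suminf_finite) (auto simp: P_def)
  finally show ?thesis
    by (simp add: numeral_2_eq_2 P_def)
qed

lemma hausdorff_pre_separated_add:
  assumes "0 \<le> \<delta>" "\<delta> < \<eta>" "\<forall>a\<in>A. \<forall>b\<in>B. \<eta> \<le> dist a b"
  shows "hausdorff_pre s \<delta> A + hausdorff_pre s \<delta> B \<le> hausdorff_pre s \<delta> (A \<union> B)"
proof (rule hausdorff_pre_greatest)
  fix C
  assume C: "C \<in> hausdorff_covers \<delta> (A \<union> B)"
  define CA where "CA i = (if C i \<inter> A = {} then {} else C i)" for i
  define CB where "CB i = (if C i \<inter> B = {} then {} else C i)" for i
  have CA: "CA \<in> hausdorff_covers \<delta> A" and CB: "CB \<in> hausdorff_covers \<delta> B"
    using C assms(1) unfolding hausdorff_covers_def CA_def CB_def by fastforce+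
  have "hausdorff_weight s (CA i) + hausdorff_weight s (CB i) \<le> hausdorff_weight s (C i)" for i
  proof (cases "C i \<inter> A = {} \<or> C i \<inter> B = {}")
    case True
    then show ?thesis
      by (auto simp: CA_def CB_def)
  next
    case False
    then obtain a b where ab: "a \<in> C i" "a \<in> A" "b \<in> C i" "b \<in> B"
      by auto
    have "dist a b \<le> diameter (C i)"
      using C ab by (intro diameter_bounded_bound) (auto simp: hausdorff_covers_def)
    also have "\<dots> \<le> \<delta>"
      using C by (auto simp: hausdorff_covers_def)
    finally show ?thesis
      using assms ab by force
  qed
  then have "(\<Sum>i. hausdorff_weight s (CA i)) + (\<Sum>i. hausdorff_weight s (CB i))
      \<le> (\<Sum>i. hausdorff_weight s (C i))"
    by (subst suminf_add) (auto intro: summableI suminf_le)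
  then show "hausdorff_pre s \<delta> A + hausdorff_pre s \<delta> B \<le> (\<Sum>i. hausdorff_weight s (C i))"
    using add_mono[OF hausdorff_pre_le_cover[OF CA] hausdorff_pre_le_cover[OF CB]]
    by (rule order_trans[rotated])
qed

lemma hausdorff_outer_separated_add:
  assumes "0 < \<eta>" "\<forall>a\<in>A. \<forall>b\<in>B. \<eta> \<le> dist a b"
  shows "hausdorff_outer s A + hausdorff_outer s B \<le> hausdorff_outer s (A \<union> B)"
proof -
  have "hausdorff_pre s \<delta>1 A + hausdorff_pre s \<delta>2 B \<le> hausdorff_outer s (A \<union> B)"
    if "0 < \<delta>1" "0 < \<delta>2" for \<delta>1 \<delta>2
  proof -
    define \<delta> where "\<delta> = min (min \<delta>1 \<delta>2) (\<eta>/2)"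
    have "0 < \<delta>"
      using that assms by (auto simp: \<delta>_def)
    have "hausdorff_pre s \<delta>1 A + hausdorff_pre s \<delta>2 B \<le> hausdorff_pre s \<delta> A + hausdorff_pre s \<delta> B"
      by (intro add_mono hausdorff_pre_antimono) (auto simp: \<delta>_def)
    also have "\<dots> \<le> hausdorff_pre s \<delta> (A \<union> B)"
      using assms \<open>0 < \<delta>\<close> by (intro hausdorff_pre_separated_add) (auto simp: \<delta>_def)
    also have "\<dots> \<le> hausdorff_outer s (A \<union> B)"
      using \<open>0 < \<delta>\<close> by (rule hausdorff_pre_le_outer)
    finally show ?thesis .
  qed
  then have "hausdorff_pre s \<delta>1 A + hausdorff_outer s B \<le> hausdorff_outer s (A \<union> B)"
    if "0 < \<delta>1" for \<delta>1
    using that unfolding hausdorff_outer_def[of s B]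
    by (simp add: ennreal_SUP_add_right) (rule SUP_least; simp)
  then show ?thesis
    unfolding hausdorff_outer_def[of s A]
    by (simp add: ennreal_SUP_add_left[symmetric]) (rule SUP_least; simp)
qed

lemma hausdorff_outer_separated_sum:
  fixes P :: "nat \<Rightarrow> 'a::metric_space set"
  assumes "\<And>N. \<exists>\<eta>>0. \<forall>a\<in>(\<Union>i<N. P i). \<forall>b\<in>P N. \<eta> \<le> dist a b"
  shows "(\<Sum>i<N. hausdorff_outer s (P i)) \<le> hausdorff_outer s (\<Union>i<N. P i)"
proof (induction N)
  case 0
  then show ?case
    by simp
next
  case (Suc N)
  obtain \<eta> where "\<eta> > 0" "\<forall>a\<in>(\<Union>i<N. P i). \<forall>b\<in>P N. \<eta> \<le> dist a b"
    using assms by blast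
  then have "hausdorff_outer s (\<Union>i<N. P i) + hausdorff_outer s (P N)
      \<le> hausdorff_outer s ((\<Union>i<N. P i) \<union> P N)"
    by (rule hausdorff_outer_separated_add)
  moreover have "(\<Union>i<N. P i) \<union> P N = (\<Union>i<Suc N. P i)"
    by (auto simp: lessThan_Suc)
  ultimately show ?case
    using Suc.IH by simp (metis add_right_mono order_trans)
qed

definition infdist_band :: "'a::metric_space set \<Rightarrow> 'a set \<Rightarrow> (nat \<Rightarrow> real) \<Rightarrow> nat \<Rightarrow> 'a set" where
  "infdist_band A F a k = {x \<in> A. a (Suc k) < infdist x F \<and> infdist x F \<le> a k}"

lemma ex_crossing_index:
  fixes a :: "nat \<Rightarrow> real"
  assumes "d \<le> a 0" "a n < d"
  shows "\<exists>k. a (Suc k) < d \<and> d \<le> a k"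
  using assms(2)
proof (induction n)
  case 0
  then show ?case
    using assms(1) by simp
next
  case (Suc n)
  then show ?case
    by (cases "a n < d") auto
qed

lemma ex_infdist_band:
  assumes "x \<in> A" "infdist x F \<le> a 0" "a n < infdist x F"
  shows "\<exists>k. x \<in> infdist_band A F a k"
  using ex_crossing_index[of "infdist x F" a n] assms by (auto simp: infdist_band_def)

lemma infdist_band_unique:
  assumes "antimono a" "x \<in> infdist_band A F a j" "x \<in> infdist_band A F a k"
  shows "j = k"
proof (rule ccontr)
  assume "j \<noteq> k"
  then consider "Suc j \<le> k" | "Suc k \<le> j"
    by linarith
  then show False
  proof cases
    case 1
    from assms(1) this have "a k \<le> a (Suc j)"
      by (rule antimonoD)
    then show False
      using assms(2,3) by (simp add: infdist_band_def)
  next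
    case 2
    from assms(1) this have "a j \<le> a (Suc k)"
      by (rule antimonoD)
    then show False
      using assms(2,3) by (simp add: infdist_band_def)
  qed
qed

abbreviation harmonic_band :: "'a::metric_space set \<Rightarrow> 'a set \<Rightarrow> nat \<Rightarrow> 'a set" where
  "harmonic_band E F \<equiv> infdist_band E F (\<lambda>i. 1 / (real i + 1))"

text \<open>Bands of equal parity are a positive distance apart, so their outer measures add up.\<close>
lemma hausdorff_outer_harmonic_bands_le:
  "(\<Sum>i. hausdorff_outer s (harmonic_band E F i)) \<le> 2 * hausdorff_outer s E"
proof -
  let ?\<mu> = "hausdorff_outer s"
  have parity: "(\<Sum>i<N. ?\<mu> (harmonic_band E F (2*i + c))) \<le> ?\<mu> E" for N c
  proof -
    have "(\<Sum>i<N. ?\<mu> (harmonic_band E F (2*i + c))) \<le> ?\<mu> (\<Union>i<N. harmonic_band E F (2*i + c))"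
    proof (rule hausdorff_outer_separated_sum)
      fix M :: nat
      show "\<exists>\<eta>>0. \<forall>a\<in>(\<Union>i<M. harmonic_band E F (2*i + c)).
              \<forall>b\<in>harmonic_band E F (2*M + c). \<eta> \<le> dist a b"
      proof (cases M)
        case 0
        then show ?thesis
          by (intro exI[of _ 1]) auto
      next
        case (Suc M')
        define \<eta> where "\<eta> = 1 / real (2*M + c) - 1 / (real (2*M + c) + 1)"
        have "0 < \<eta>"
          unfolding \<eta>_def using Suc by (simp add: frac_less2)
        moreover have "\<eta> \<le> dist a b"
          if a: "a \<in> (\<Union>i<M. harmonic_band E F (2*i + c))" and b: "b \<in> harmonic_band E F (2*M + c)"
          for a b
        proof -
          obtain i where "i < M" "a \<in> harmonic_band E F (2*i + c)"
            using a by blast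
          then have i: "i < M" "1 / (real (2*i + c) + 2) < infdist a F"
            by (simp_all add: infdist_band_def) (simp add: ac_simps)
          have "1 / real (2*M + c) \<le> 1 / (real (2*i + c) + 2)"
            using i by (intro frac_le) auto
          moreover have "infdist b F \<le> 1 / (real (2*M + c) + 1)"
            using b by (simp add: infdist_band_def)
          moreover have "infdist a F \<le> infdist b F + dist a b"
            by (rule infdist_triangle)
          ultimately show ?thesis
            using i unfolding \<eta>_def by simp
        qed
        ultimately show ?thesis
          by blast
      qed
    qed
    also have "\<dots> \<le> ?\<mu> E"
      by (rule hausdorff_outer_mono) (auto simp: infdist_band_def)
    finally show ?thesis .
  qed
  show ?thesis
  proof (rule suminf_le_const[OF summableI])
    fix n
    have "(\<Sum>i<n. ?\<mu> (harmonic_band E F i)) \<le> (\<Sum>i<2*n. ?\<mu> (harmonic_band E F i))"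
      by (intro sum_mono2) auto
    also have "\<dots> = (\<Sum>i<n. ?\<mu> (harmonic_band E F (2*i))) + (\<Sum>i<n. ?\<mu> (harmonic_band E F (2*i + 1)))"
      by (induction n) (auto simp: algebra_simps)
    also have "\<dots> \<le> ?\<mu> E + ?\<mu> E"
      using parity[of 0 n] parity[of 1 n] by (intro add_mono) simp_all
    finally show "(\<Sum>i<n. ?\<mu> (harmonic_band E F i)) \<le> 2 * ?\<mu> E"
      by (simp add: mult_2)
  qed
qed

lemma Diff_closed_subset_harmonic_bands:
  assumes "closed F" "F \<noteq> {}"
  shows "E - F \<subseteq> {x \<in> E. 1 / (real j + 1) \<le> infdist x F} \<union> (\<Union>i. harmonic_band E F (i + j))"
proof
  fix x
  assume x: "x \<in> E - F"
  show "x \<in> {x \<in> E. 1 / (real j + 1) \<le> infdist x F} \<union> (\<Union>i. harmonic_band E F (i + j))"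
  proof (cases "1 / (real j + 1) \<le> infdist x F")
    case True
    then show ?thesis
      using x by simp
  next
    case False
    have "0 < infdist x F"
      using x infdist_pos_not_in_closed[OF assms] by auto
    then obtain n :: nat where "0 < n" "inverse (real n) < infdist x F"
      using ex_inverse_of_nat_less by blast
    moreover have "1 / (real (n + j) + 1) \<le> inverse (real n)"
      using \<open>0 < n\<close> by (simp add: inverse_eq_divide frac_le)
    ultimately have "1 / (real (n + j) + 1) < infdist x F"
      by linarith
    then obtain k where "x \<in> infdist_band E F (\<lambda>i. 1 / (real (i + j) + 1)) k"
      using ex_infdist_band[of x E F "\<lambda>i. 1 / (real (i + j) + 1)"] x False by auto
    then have "x \<in> harmonic_band E F (k + j)"
      by (simp add: infdist_band_def add_ac)
    then show ?thesis
      by blast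
  qed
qed

text \<open>The standard argument for metric outer measures: the part of \<open>E\<close> at distance
  \<open>\<ge> 1/(j+1)\<close> from \<open>F\<close> is separated from \<open>F\<close>, and the rest lies in the tail of a
  convergent series of band measures.\<close>
lemma closed_in_hausdorff_lambda_system:
  assumes "closed F"
  shows "F \<in> lambda_system UNIV UNIV (hausdorff_outer s)"
  unfolding lambda_system_def
proof (intro CollectI conjI ballI UNIV_I)
  fix E :: "'a set"
  let ?\<mu> = "hausdorff_outer s"
  define G where "G j = {x \<in> E. 1 / (real j + 1) \<le> infdist x F}" for j :: nat
  have "(F \<inter> E) \<union> ((UNIV - F) \<inter> E) = E"
    by auto
  then have "?\<mu> E \<le> ?\<mu> (F \<inter> E) + ?\<mu> ((UNIV - F) \<inter> E)"
    using hausdorff_outer_subadditive[of s "F \<inter> E" "(UNIV - F) \<inter> E"] by simp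
  moreover have "?\<mu> (F \<inter> E) + ?\<mu> ((UNIV - F) \<inter> E) \<le> ?\<mu> E"
  proof (cases "F = {} \<or> ?\<mu> E = top")
    case True
    then show ?thesis
      by auto
  next
    case False
    then have "F \<noteq> {}" and fin: "?\<mu> E < top"
      by (auto simp: top.not_eq_extremum)
    have near: "?\<mu> (F \<inter> E) + ?\<mu> (G j) \<le> ?\<mu> E" for j
    proof -
      have "\<forall>a\<in>F \<inter> E. \<forall>b\<in>G j. 1 / (real j + 1) \<le> dist a b"
      proof (intro ballI)
        fix a b
        assume "a \<in> F \<inter> E" "b \<in> G j"
        then show "1 / (real j + 1) \<le> dist a b"
          using infdist_le[of a F b] by (simp add: G_def dist_commute)
      qed
      then have "?\<mu> (F \<inter> E) + ?\<mu> (G j) \<le> ?\<mu> ((F \<inter> E) \<union> G j)"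
        by (intro hausdorff_outer_separated_add) simp_all
      also have "\<dots> \<le> ?\<mu> E"
        by (rule hausdorff_outer_mono) (auto simp: G_def)
      finally show ?thesis .
    qed
    have far: "?\<mu> ((UNIV - F) \<inter> E) \<le> ?\<mu> (G j) + (\<Sum>i. ?\<mu> (harmonic_band E F (i + j)))" for j
    proof -
      have "?\<mu> ((UNIV - F) \<inter> E) \<le> ?\<mu> (G j \<union> (\<Union>i. harmonic_band E F (i + j)))"
        using Diff_closed_subset_harmonic_bands[OF assms \<open>F \<noteq> {}\<close>, of E j]
        by (intro hausdorff_outer_mono) (auto simp: G_def)
      also have "\<dots> \<le> ?\<mu> (G j) + ?\<mu> (\<Union>i. harmonic_band E F (i + j))"
        by (rule hausdorff_outer_subadditive)
      also have "\<dots> \<le> ?\<mu> (G j) + (\<Sum>i. ?\<mu> (harmonic_band E F (i + j)))"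
        by (intro add_left_mono hausdorff_outer_countably_subadditive)
      finally show ?thesis .
    qed
    have "(\<Sum>i. ?\<mu> (harmonic_band E F i)) < top"
      using hausdorff_outer_harmonic_bands_le[of s E F] fin
      by (metis ennreal_mult_less_top ennreal_numeral_less_top order_le_less_trans)
    show ?thesis
    proof (rule ennreal_le_epsilon)
      fix e :: real
      assume "0 < e"
      with ennreal_suminf_tail_le[OF \<open>(\<Sum>i. ?\<mu> (harmonic_band E F i)) < top\<close>]
      obtain j where j: "(\<Sum>i. ?\<mu> (harmonic_band E F (i + j))) \<le> ennreal e"
        by blast
      have "?\<mu> (F \<inter> E) + ?\<mu> ((UNIV - F) \<inter> E)
          \<le> (?\<mu> (F \<inter> E) + ?\<mu> (G j)) + (\<Sum>i. ?\<mu> (harmonic_band E F (i + j)))"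
        using far[of j] by (simp add: add.assoc add_left_mono)
      also have "\<dots> \<le> ?\<mu> E + ennreal e"
        by (intro add_mono near j)
      finally show "?\<mu> (F \<inter> E) + ?\<mu> ((UNIV - F) \<inter> E) \<le> ?\<mu> E + ennreal e" .
    qed
  qed
  ultimately show "?\<mu> (F \<inter> E) + ?\<mu> ((UNIV - F) \<inter> E) = ?\<mu> E"
    by (rule antisym[rotated])
qed

lemma measure_space_hausdorff_outer:
  "measure_space (UNIV :: 'a::metric_space set) (lambda_system UNIV UNIV (hausdorff_outer s))
     (hausdorff_outer s)"
proof -
  interpret sigma_algebra "UNIV :: 'a set" "UNIV :: 'a set set"
    using sigma_algebra_Pow[of "UNIV :: 'a set"] by simp
  have "outer_measure_space (UNIV :: 'a set set) (hausdorff_outer s)"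
    unfolding outer_measure_space_def positive_def increasing_def countably_subadditive_def
    by (auto simp: hausdorff_outer_mono hausdorff_outer_countably_subadditive)
  then show ?thesis
    by (rule caratheodory_lemma)
qed

lemma sets_hausdorff_measure:
  "sets (hausdorff_measure s :: 'a::metric_space measure) =
     lambda_system UNIV UNIV (hausdorff_outer s)"
proof -
  have "sigma_algebra (UNIV :: 'a set) (lambda_system UNIV UNIV (hausdorff_outer s))"
    using measure_space_hausdorff_outer[of s] unfolding measure_space_def by blast
  then show ?thesis
    unfolding hausdorff_measure_def by (simp add: sets_measure_of sigma_algebra.sigma_sets_eq)
qed

lemma emeasure_hausdorff_measure:
  assumes "A \<in> sets (hausdorff_measure s :: 'a::metric_space measure)"
  shows "emeasure (hausdorff_measure s) A = hausdorff_outer s A"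
proof -
  have "A \<in> lambda_system UNIV UNIV (hausdorff_outer s)"
    using assms by (simp add: sets_hausdorff_measure)
  then show ?thesis
    using measure_space_hausdorff_outer[of s] unfolding hausdorff_measure_def
    by (intro emeasure_measure_of_sigma) (auto simp: measure_space_def)
qed

lemma borel_subset_sets_hausdorff_measure:
  "sets (borel :: 'a::metric_space measure) \<subseteq> sets (hausdorff_measure s)"
proof -
  have "Collect closed \<subseteq> sets (hausdorff_measure s :: 'a measure)"
    by (auto simp: sets_hausdorff_measure closed_in_hausdorff_lambda_system)
  then have "sigma_sets (space (hausdorff_measure s)) (Collect closed) \<subseteq> sets (hausdorff_measure s :: 'a measure)"
    by (rule sets.sigma_sets_subset)
  moreover have "space (hausdorff_measure s :: 'a measure) = UNIV"
    by (simp add: hausdorff_measure_def space_measure_of_conv)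
  ultimately show ?thesis
    unfolding borel_eq_closed by simp
qed

section \<open>Radial shells\<close>

definition radial_shell :: "real \<Rightarrow> real \<Rightarrow> 'a::real_normed_vector set \<Rightarrow> 'a set" where
  "radial_shell l h C = {t *\<^sub>R x | x t. x \<in> C \<and> norm x \<le> l \<and> 1 - h \<le> t \<and> t \<le> 1 \<and> 0 \<le> t}"

lemma radial_shell_mono: "C \<subseteq> D \<Longrightarrow> radial_shell l h C \<subseteq> radial_shell l h D"
  unfolding radial_shell_def by blast

lemma radial_shell_UN: "radial_shell l h (\<Union>i. C i) = (\<Union>i. radial_shell l h (C i))"
  unfolding radial_shell_def by blast

lemma radial_shell_empty [simp]: "radial_shell l h {} = {}"
  unfolding radial_shell_def by blast

text \<open>The radial segments through a set of diameter at most \<open>\<rho>\<close> are covered by \<open>m + 1\<close>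
  balls of radius \<open>2 \<rho>\<close> centred at equally spaced points of one of them.\<close>
lemma radial_shell_subset_cballs:
  fixes C :: "'a::real_normed_vector set"
  assumes "bounded C" "diameter C \<le> \<rho>" "x0 \<in> C" "norm x0 \<le> l"
    and "0 < h" "0 < m" "l * h \<le> \<rho> * real m"
  shows "radial_shell l h C \<subseteq> (\<Union>j\<le>m. cball ((1 - h + real j * h / real m) *\<^sub>R x0) (2 * \<rho>))"
proof
  fix p
  assume "p \<in> radial_shell l h C"
  then obtain x t where p: "p = t *\<^sub>R x" and x: "x \<in> C"
    and t: "1 - h \<le> t" "t \<le> 1" "0 \<le> t"
    unfolding radial_shell_def by blast
  define u where "u = (t - (1 - h)) * real m / h"
  define j where "j = nat \<lfloor>u\<rfloor>"
  define tj where "tj = 1 - h + real j * h / real m"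
  have "(t - (1 - h)) * real m \<le> h * real m"
    using t by (intro mult_right_mono) auto
  then have u: "0 \<le> u" "u \<le> real m"
    using t assms(5,6) by (simp_all add: u_def pos_divide_le_eq)
  then have j: "real j \<le> u" "u < real j + 1" "j \<le> m"
    unfolding j_def by linarith+
  have t_eq: "t - tj = (u - real j) * h / real m"
    using assms(5,6) by (simp add: u_def tj_def field_simps)
  have "0 \<le> u - real j" "u - real j \<le> 1"
    using j by linarith+
  then have "0 \<le> t - tj" "t - tj \<le> 1 * h / real m"
    unfolding t_eq using assms(5,6) by (auto intro!: divide_right_mono mult_right_mono)
  have "norm (p - tj *\<^sub>R x0) = norm (t *\<^sub>R (x - x0) + (t - tj) *\<^sub>R x0)"
    unfolding p by (simp add: algebra_simps)
  also have "\<dots> \<le> t * norm (x - x0) + (t - tj) * norm x0"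
    using norm_triangle_ineq[of "t *\<^sub>R (x - x0)" "(t - tj) *\<^sub>R x0"] t \<open>0 \<le> t - tj\<close> by simp
  also have "\<dots> \<le> 1 * \<rho> + h / real m * l"
  proof (intro add_mono mult_mono)
    show "norm (x - x0) \<le> \<rho>"
      using diameter_bounded_bound[OF assms(1) x assms(3)] assms(2) by (simp add: dist_norm)
  qed (use t \<open>0 \<le> t - tj\<close> \<open>t - tj \<le> 1 * h / real m\<close> assms(4,5,6) in auto)
  also have "\<dots> \<le> 2 * \<rho>"
    using assms(6,7) by (simp add: field_simps)
  finally show "p \<in> (\<Union>j\<le>m. cball ((1 - h + real j * h / real m) *\<^sub>R x0) (2 * \<rho>))"
    using j(3) by (auto simp: tj_def dist_norm norm_minus_commute)
qed

lemma radial_shell_cover_measure_le: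
  fixes C :: "'a::euclidean_space set"
  assumes "1 \<le> l" "0 < \<rho>" "\<rho> \<le> h" "bounded C" "diameter C \<le> \<rho>"
  shows "\<exists>U\<in>sets borel. radial_shell l h C \<subseteq> U \<and>
    emeasure lborel U \<le> ennreal (3 * 2^DIM('a) * unit_ball_vol DIM('a) * l * h * \<rho>^(DIM('a) - 1))"
proof (cases "\<exists>x0\<in>C. norm x0 \<le> l")
  case False
  then have "radial_shell l h C = {}"
    unfolding radial_shell_def by auto
  then show ?thesis
    by (intro bexI[of _ "{}"]) auto
next
  case True
  then obtain x0 where x0: "x0 \<in> C" "norm x0 \<le> l"
    by blast
  let ?V = "unit_ball_vol DIM('a) * (2 * \<rho>)^DIM('a)"
  define m where "m = nat \<lceil>l * h / \<rho>\<rceil>"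
  have "0 < l * h / \<rho>"
    using assms by simp
  then have m: "l * h / \<rho> \<le> real m" "real m \<le> l * h / \<rho> + 1" "0 < m"
    unfolding m_def by linarith+
  define U where "U = (\<Union>j\<le>m. cball ((1 - h + real j * h / real m) *\<^sub>R x0) (2 * \<rho>))"
  have bound: "(real m + 1) * ?V \<le> 3 * 2^DIM('a) * unit_ball_vol DIM('a) * l * h * \<rho>^(DIM('a) - 1)"
  proof -
    define W where "W = unit_ball_vol DIM('a) * 2^DIM('a) * \<rho>^(DIM('a) - 1)"
    have "\<rho> \<le> l * h"
      using assms mult_right_mono[of 1 l h] by linarith
    have "(real m + 1) * ?V = ((real m + 1) * \<rho>) * W"
      by (simp add: W_def power_mult_distrib power_eq_if[of \<rho> "DIM('a)"])
    also have "\<dots> \<le> (3 * l * h) * W"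
      using m(2) assms(2) \<open>\<rho> \<le> l * h\<close> by (intro mult_right_mono) (simp_all add: W_def field_simps)
    also have "\<dots> = 3 * 2^DIM('a) * unit_ball_vol DIM('a) * l * h * \<rho>^(DIM('a) - 1)"
      by (simp add: W_def)
    finally show ?thesis .
  qed
  have "radial_shell l h C \<subseteq> U"
    unfolding U_def using assms m(1,3) x0
    by (intro radial_shell_subset_cballs) (auto simp: field_simps)
  moreover have "emeasure lborel U
      \<le> ennreal (3 * 2^DIM('a) * unit_ball_vol DIM('a) * l * h * \<rho>^(DIM('a) - 1))"
  proof -
    have "emeasure lborel U
        \<le> (\<Sum>j\<le>m. emeasure lborel (cball ((1 - h + real j * h / real m) *\<^sub>R x0) (2 * \<rho>)))"
      unfolding U_def by (intro emeasure_subadditive_finite) auto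
    also have "\<dots> = (\<Sum>j\<le>m. ennreal ?V)"
      using assms by (simp add: emeasure_cball)
    also have "\<dots> = ennreal ((real m + 1) * ?V)"
      using assms by (subst sum_ennreal) (auto simp: algebra_simps)
    also have "\<dots> \<le> ennreal (3 * 2^DIM('a) * unit_ball_vol DIM('a) * l * h * \<rho>^(DIM('a) - 1))"
      using bound by (rule ennreal_leI)
    finally show ?thesis .
  qed
  ultimately show ?thesis
    by (intro bexI[of _ U]) (auto simp: U_def)
qed

lemma radial_shell_measure_le_diameter:
  fixes C :: "'a::euclidean_space set"
  assumes "1 \<le> l" "0 < h" "bounded C" "diameter C \<le> h" "0 < \<epsilon>"
  shows "\<exists>U\<in>sets borel. radial_shell l h C \<subseteq> U \<and>
    emeasure lborel U \<le>
      ennreal (3 * 2^DIM('a) * unit_ball_vol DIM('a) * l * h * diameter C ^ (DIM('a) - 1)) + ennreal \<epsilon>"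
proof -
  let ?k = "DIM('a) - 1"
  let ?K = "3 * 2^DIM('a) * unit_ball_vol DIM('a) * l * h"
  have "0 < ?K"
    using assms by simp
  have "0 \<le> diameter C"
    using assms(3) by (rule diameter_ge_0)
  obtain \<rho> where \<rho>: "0 < \<rho>" "\<rho> \<le> h" "diameter C \<le> \<rho>" "?K * \<rho>^?k \<le> ?K * diameter C ^ ?k + \<epsilon>"
  proof (cases "?k = 0")
    case True
    then show ?thesis
      using that[of h] assms by simp
  next
    case False
    define \<delta> where "\<delta> = min (min h 1) (\<epsilon> / ?K)"
    have \<delta>: "0 < \<delta>" "\<delta> \<le> 1" "\<delta> \<le> \<epsilon> / ?K" "\<delta> \<le> h"
      using assms \<open>0 < ?K\<close> by (auto simp: \<delta>_def)
    have "\<delta>^?k \<le> \<delta>^1"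
      using False \<delta> by (intro power_decreasing) auto
    also have "\<dots> \<le> \<epsilon> / ?K"
      using \<delta> by simp
    finally have "?K * \<delta>^?k \<le> \<epsilon>"
      using \<open>0 < ?K\<close> by (simp add: field_simps)
    moreover have "max (diameter C) \<delta> ^ ?k \<le> diameter C ^ ?k + \<delta>^?k"
      using \<open>0 \<le> diameter C\<close> \<delta>(1) by (simp add: max_def)
    then have "?K * max (diameter C) \<delta> ^ ?k \<le> ?K * (diameter C ^ ?k + \<delta>^?k)"
      using \<open>0 < ?K\<close> by (intro mult_left_mono) auto
    ultimately have "?K * max (diameter C) \<delta> ^ ?k \<le> ?K * diameter C ^ ?k + \<epsilon>"
      by (simp add: distrib_left)
    then show ?thesis
      by (intro that[of "max (diameter C) \<delta>"]) (use \<delta> assms(4) in auto)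
  qed
  from radial_shell_cover_measure_le[OF assms(1) \<rho>(1,2) assms(3) \<rho>(3)]
  obtain U where U: "U \<in> sets borel" "radial_shell l h C \<subseteq> U" "emeasure lborel U \<le> ennreal (?K * \<rho>^?k)"
    by auto
  have "ennreal (?K * \<rho>^?k) \<le> ennreal (?K * diameter C ^ ?k + \<epsilon>)"
    using \<rho>(4) by (rule ennreal_leI)
  also have "\<dots> = ennreal (?K * diameter C ^ ?k) + ennreal \<epsilon>"
    using assms(5) \<open>0 < ?K\<close> \<open>0 \<le> diameter C\<close> by (intro ennreal_plus) auto
  finally show ?thesis
    using U by (intro bexI[of _ U]) auto
qed

text \<open>The constant converting the diameter bound above into the normalized weight
  \<open>\<omega>\<^sub>n\<^sub>-\<^sub>1 (diam C / 2)\<^sup>n\<^sup>-\<^sup>1\<close> of the Hausdorff measure.\<close>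
definition radial_shell_const :: "'a::euclidean_space itself \<Rightarrow> real" where
  "radial_shell_const _ =
     3 * 2^DIM('a) * unit_ball_vol DIM('a) * 2^(DIM('a) - 1) / unit_ball_vol (real (DIM('a) - 1))"

lemma radial_shell_const_pos: "0 < radial_shell_const TYPE('a::euclidean_space)"
  unfolding radial_shell_const_def by simp

lemma diameter_bound_eq_hausdorff_weight:
  fixes C :: "'a::euclidean_space set"
  assumes "C \<noteq> {}" "0 \<le> l * h"
  shows "ennreal (3 * 2^DIM('a) * unit_ball_vol DIM('a) * l * h * diameter C ^ (DIM('a) - 1))
       = ennreal (radial_shell_const TYPE('a) * l * h) * hausdorff_weight (DIM('a) - 1) C"
proof -
  let ?s = "DIM('a) - 1"
  have "real ?s = real DIM('a) - 1"
    using DIM_positive[where 'a='a] by (simp add: of_nat_diff)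
  then have "unit_ball_vol (real DIM('a) - 1) \<noteq> 0"
    using unit_ball_vol_pos[of "real ?s"] by (metis less_irrefl of_nat_0_le_iff)
  moreover have "diameter C ^ ?s = 2^?s * (diameter C / 2)^?s"
    by (simp add: power_divide)
  ultimately have eq: "3 * 2^DIM('a) * unit_ball_vol DIM('a) * l * h * diameter C ^ ?s
      = (radial_shell_const TYPE('a) * l * h) * (unit_ball_vol (real ?s) * (diameter C / 2) ^ ?s)"
    unfolding radial_shell_const_def by (simp add: field_simps)
  have "0 \<le> radial_shell_const TYPE('a) * l * h"
    using assms(2) radial_shell_const_pos[where 'a='a] by (simp add: mult.assoc)
  moreover have "hausdorff_weight ?s C = ennreal (unit_ball_vol (real ?s) * (diameter C / 2) ^ ?s)"
    using assms(1) by (simp add: hausdorff_weight_def)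
  ultimately show ?thesis
    unfolding eq by (simp only: ennreal_mult')
qed

lemma radial_shell_measure_le_cover:
  fixes C :: "nat \<Rightarrow> 'a::euclidean_space set"
  assumes "1 \<le> l" "0 < h" "0 < \<epsilon>" "C \<in> hausdorff_covers h S"
  shows "\<exists>U\<in>sets borel. radial_shell l h S \<subseteq> U \<and>
     emeasure lborel U \<le> ennreal (radial_shell_const TYPE('a) * l * h) *
       (\<Sum>i. hausdorff_weight (DIM('a) - 1) (C i)) + ennreal \<epsilon>"
proof -
  let ?c = "ennreal (radial_shell_const TYPE('a) * l * h)"
  let ?w = "hausdorff_weight (DIM('a) - 1)"
  have "\<exists>U. U \<in> sets borel \<and> radial_shell l h (C i) \<subseteq> U \<and>
      emeasure lborel U \<le> ?c * ?w (C i) + ennreal (\<epsilon> * (1/2)^Suc i)" for i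
  proof (cases "C i = {}")
    case True
    then show ?thesis
      by (intro exI[of _ "{}"]) auto
  next
    case False
    have "bounded (C i)" "diameter (C i) \<le> h" "0 < \<epsilon> * (1/2)^Suc i"
      using assms(3,4) by (auto simp: hausdorff_covers_def)
    from radial_shell_measure_le_diameter[OF assms(1,2) this]
    show ?thesis
      using diameter_bound_eq_hausdorff_weight[OF False, of l h] assms(1,2) by auto
  qed
  then obtain U where U: "\<And>i. U i \<in> sets borel" "\<And>i. radial_shell l h (C i) \<subseteq> U i"
    "\<And>i. emeasure lborel (U i) \<le> ?c * ?w (C i) + ennreal (\<epsilon> * (1/2)^Suc i)"
    by metis
  have "radial_shell l h S \<subseteq> (\<Union>i. radial_shell l h (C i))"
    using assms(4) radial_shell_mono[of S "\<Union>i. C i" l h]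
    by (auto simp: hausdorff_covers_def radial_shell_UN)
  then have "radial_shell l h S \<subseteq> (\<Union>i. U i)"
    using U(2) by blast
  moreover have "emeasure lborel (\<Union>i. U i) \<le> (\<Sum>i. emeasure lborel (U i))"
    using U(1) by (intro emeasure_subadditive_countably) auto
  moreover have "\<dots> \<le> (\<Sum>i. ?c * ?w (C i) + ennreal (\<epsilon> * (1/2)^Suc i))"
    by (intro suminf_le summableI U(3))
  moreover have "\<dots> = (\<Sum>i. ?c * ?w (C i)) + (\<Sum>i. ennreal (\<epsilon> * (1/2)^Suc i))"
    by (rule suminf_add[symmetric]) (auto intro: summableI)
  moreover have "\<dots> = ?c * (\<Sum>i. ?w (C i)) + ennreal \<epsilon>"
    using assms(3) by (simp only: ennreal_suminf_cmult suminf_ennreal_half_powers less_imp_le)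
  ultimately show ?thesis
    using U(1) by (intro bexI[of _ "\<Union>i. U i"]) (auto intro: order_trans)
qed

lemma radial_shell_measure_le_hausdorff:
  fixes S :: "'a::euclidean_space set"
  assumes "1 \<le> l" "0 < h" "0 < \<epsilon>"
  shows "\<exists>U\<in>sets borel. radial_shell l h S \<subseteq> U \<and>
     emeasure lborel U \<le> ennreal (radial_shell_const TYPE('a) * l * h) *
       hausdorff_outer (DIM('a) - 1) S + ennreal \<epsilon>"
proof -
  let ?s = "DIM('a) - 1"
  define c where "c = radial_shell_const TYPE('a) * l * h"
  have "0 < c"
    unfolding c_def using radial_shell_const_pos[where 'a='a] assms by simp
  show ?thesis
  proof (cases "hausdorff_outer ?s S = top")
    case True
    then show ?thesis
      using \<open>0 < c\<close> unfolding c_def[symmetric] by (intro bexI[of _ UNIV]) (auto simp: ennreal_mult_top)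
  next
    case False
    then have "hausdorff_pre ?s h S < top"
      using hausdorff_pre_le_outer[OF assms(2), of ?s S] by (simp add: top.not_eq_extremum)
    moreover have "0 < ennreal (\<epsilon> / (2 * c))"
      using assms(3) \<open>0 < c\<close> by simp
    ultimately obtain C where C: "C \<in> hausdorff_covers h S"
      "(\<Sum>i. hausdorff_weight ?s (C i)) < hausdorff_pre ?s h S + ennreal (\<epsilon> / (2 * c))"
      using hausdorff_pre_cover_approx by blast
    have "0 < \<epsilon> / 2"
      using assms(3) by simp
    from radial_shell_measure_le_cover[OF assms(1,2) this C(1)]
    obtain U where U: "U \<in> sets borel" "radial_shell l h S \<subseteq> U"
      "emeasure lborel U \<le> ennreal c * (\<Sum>i. hausdorff_weight ?s (C i)) + ennreal (\<epsilon> / 2)"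
      unfolding c_def by blast
    have "ennreal c * (\<Sum>i. hausdorff_weight ?s (C i))
        \<le> ennreal c * (hausdorff_pre ?s h S + ennreal (\<epsilon> / (2 * c)))"
      using C(2) by (intro mult_left_mono) auto
    also have "\<dots> = ennreal c * hausdorff_pre ?s h S + ennreal (\<epsilon> / 2)"
      using \<open>0 < c\<close> assms(3) by (simp add: distrib_left ennreal_mult[symmetric])
    also have "\<dots> \<le> ennreal c * hausdorff_outer ?s S + ennreal (\<epsilon> / 2)"
      by (intro add_right_mono mult_left_mono hausdorff_pre_le_outer assms(2)) auto
    finally have "emeasure lborel U \<le> ennreal c * hausdorff_outer ?s S + ennreal (\<epsilon> / 2) + ennreal (\<epsilon> / 2)"
      using U(3) by (meson add_right_mono order_trans)
    also have "\<dots> = ennreal c * hausdorff_outer ?s S + ennreal \<epsilon>"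
      using assms(3) by (simp add: add.assoc ennreal_plus[symmetric])
    finally show ?thesis
      using U(1,2) unfolding c_def by blast
  qed
qed

section \<open>Convex bodies\<close>

text \<open>If \<open>t x \<notin> Y\<close>, every point of \<open>Y\<close> near \<open>x\<close> can be pushed into \<open>B(0, r)\<close> along the
  segment towards \<open>t x\<close>; convexity then forces \<open>d(x, Y) \<ge> (1 - t) r\<close>.\<close>
lemma infdist_ge_of_scaleR_notin_convex:
  fixes x :: "'a::euclidean_space"
  assumes "convex Y" "ball 0 r \<subseteq> Y" "0 < r" "0 \<le> t" "t \<le> 1" "t *\<^sub>R x \<notin> Y"
  shows "(1 - t) * r \<le> infdist x Y"
proof (rule ccontr)
  assume "\<not> (1 - t) * r \<le> infdist x Y"
  then have lt: "infdist x Y < (1 - t) * r"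
    by simp
  have "Y \<noteq> {}"
    using assms(2,3) by auto
  then obtain y where y: "y \<in> Y" "dist x y < (1 - t) * r"
    using lt by (auto simp: infdist_notempty cINF_less_iff)
  have "t < 1"
    using lt infdist_nonneg[of x Y] assms(3) by (smt (verit) mult_nonpos_nonneg)
  define z where "z = (t / (1 - t)) *\<^sub>R (x - y)"
  have "norm z = t / (1 - t) * norm (x - y)"
    using assms(4) \<open>t < 1\<close> by (simp add: z_def)
  also have "\<dots> \<le> 1 / (1 - t) * norm (x - y)"
    using assms(5) \<open>t < 1\<close> by (intro mult_right_mono divide_right_mono) auto
  also have "\<dots> < 1 / (1 - t) * ((1 - t) * r)"
    using y(2) \<open>t < 1\<close> by (intro mult_strict_left_mono) (auto simp: dist_norm)
  also have "\<dots> = r"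
    using \<open>t < 1\<close> by simp
  finally have "z \<in> Y"
    using assms(2) by auto
  then have "t *\<^sub>R y + (1 - t) *\<^sub>R z \<in> Y"
    using assms(1,4,5) y(1) by (intro convexD) auto
  moreover have "(1 - t) *\<^sub>R z = t *\<^sub>R (x - y)"
    using \<open>t < 1\<close> by (simp add: z_def)
  then have "t *\<^sub>R y + (1 - t) *\<^sub>R z = t *\<^sub>R x"
    by (simp add: algebra_simps)
  ultimately show False
    using assms(6) by simp
qed

lemma convex_point_on_ray_to_frontier:
  fixes p :: "'a::euclidean_space"
  assumes "convex X" "bounded X" "0 \<in> interior X" "p \<in> X" "p \<noteq> 0"
  shows "\<exists>x\<in>frontier X. \<exists>t. 0 < t \<and> t \<le> 1 \<and> p = t *\<^sub>R x"
proof -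
  obtain d where d: "0 < d" "d *\<^sub>R p \<in> frontier X"
    using ray_to_frontier[OF assms(2,3,5)] by auto
  have "1 \<le> d"
  proof (rule ccontr)
    assume "\<not> 1 \<le> d"
    then have "p - (1 - d) *\<^sub>R (p - 0) \<in> interior X"
      using assms d closure_subset by (intro mem_interior_closure_convex_shrink[OF assms(1,3)]) auto
    moreover have "p - (1 - d) *\<^sub>R (p - 0) = d *\<^sub>R p"
      by (simp add: algebra_simps)
    ultimately show False
      using d(2) by (simp add: frontier_def)
  qed
  then show ?thesis
    using d by (intro bexI[of _ "d *\<^sub>R p"] exI[of _ "1/d"]) auto
qed

text \<open>Every point of \<open>X - Y\<close> lies on a radial segment \<open>[t x, x]\<close> ending at a boundary point
  \<open>x\<close> of \<open>X\<close>; if \<open>x\<close> lies in the band \<open>k\<close>, the segment has relative length at most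
  \<open>l d(x, Y) \<le> l\<^sup>2 2\<^sup>-\<^sup>k\<close>.\<close>
lemma convex_Diff_subset_radial_shells:
  fixes X Y :: "'a::euclidean_space set"
  assumes "1 \<le> l" "convex X" "ball 0 (1/l) \<subseteq> X" "X \<subseteq> ball 0 l"
    and "convex Y" "ball 0 (1/l) \<subseteq> Y"
  shows "X - Y \<subseteq> frontier X \<union>
           (\<Union>k. radial_shell l (l^2 * (1/2)^k) (infdist_band (frontier X) Y (\<lambda>k. l * (1/2)^k) k))"
proof
  fix p
  assume p: "p \<in> X - Y"
  have "0 < l" "0 < 1/l"
    using assms(1) by simp_all
  then have "0 \<in> Y"
    using assms(6) by auto
  have "0 \<in> interior X"
    using interior_mono[OF assms(3)] \<open>0 < 1/l\<close> by auto
  moreover have "bounded X"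
    using assms(4) bounded_ball bounded_subset by blast
  ultimately obtain x t where x: "x \<in> frontier X" and t: "0 < t" "t \<le> 1" and pt: "p = t *\<^sub>R x"
    using convex_point_on_ray_to_frontier[OF assms(2)] p \<open>0 \<in> Y\<close> by blast
  have "x \<in> closure (ball 0 l)"
    using x closure_mono[OF assms(4)] by (auto simp: frontier_def)
  then have "norm x \<le> l"
    using \<open>0 < l\<close> by simp
  have "(1 - t) * (1/l) \<le> infdist x Y"
    using infdist_ge_of_scaleR_notin_convex[OF assms(5,6) \<open>0 < 1/l\<close>, of t x] t p pt by auto
  then have shrink: "1 - t \<le> l * infdist x Y"
    using \<open>0 < l\<close> by (simp add: field_simps)
  show "p \<in> frontier X \<union>
      (\<Union>k. radial_shell l (l^2 * (1/2)^k) (infdist_band (frontier X) Y (\<lambda>k. l * (1/2)^k) k))"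
  proof (cases "infdist x Y = 0")
    case True
    then show ?thesis
      using shrink t pt x by simp
  next
    case False
    then have "0 < infdist x Y / l"
      using infdist_nonneg[of x Y] \<open>0 < l\<close> by simp
    then obtain n where "(1/2::real)^n < infdist x Y / l"
      using real_arch_pow_inv[of "infdist x Y / l" "1/2"] by auto
    moreover have "infdist x Y \<le> l"
      using infdist_le[OF \<open>0 \<in> Y\<close>, of x] \<open>norm x \<le> l\<close> by simp
    ultimately obtain k where k: "x \<in> infdist_band (frontier X) Y (\<lambda>k. l * (1/2)^k) k"
      using ex_infdist_band[OF x, of Y "\<lambda>k. l * (1/2)^k" n] \<open>0 < l\<close> by (auto simp: field_simps)
    then have "l * infdist x Y \<le> l * (l * (1/2)^k)"
      using \<open>0 < l\<close> by (intro mult_left_mono) (auto simp: infdist_band_def)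
    then have "1 - t \<le> l^2 * (1/2)^k"
      using shrink by (simp add: power2_eq_square mult.assoc)
    then have "p \<in> radial_shell l (l^2 * (1/2)^k) (infdist_band (frontier X) Y (\<lambda>k. l * (1/2)^k) k)"
      unfolding radial_shell_def pt
    proof (intro CollectI exI conjI)
      show "t *\<^sub>R x = t *\<^sub>R x" ..
    qed (use k \<open>norm x \<le> l\<close> t \<open>1 - t \<le> l^2 * (1/2)^k\<close> in auto)
    then show ?thesis
      by blast
  qed
qed

lemma emeasure_Diff_swap:
  assumes "A \<in> sets M" "B \<in> sets M" "emeasure M A = emeasure M B" "emeasure M A \<noteq> \<infinity>"
  shows "emeasure M (A - B) = emeasure M (B - A)"
proof -
  have "emeasure M (A \<inter> B) \<noteq> \<infinity>"
    using emeasure_mono[of "A \<inter> B" A M] assms by (auto simp: top_unique)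
  moreover have "A - B = A - A \<inter> B" "B - A = B - A \<inter> B"
    by auto
  ultimately show ?thesis
    using emeasure_Diff[of M "A \<inter> B" A] emeasure_Diff[of M "A \<inter> B" B] assms by simp
qed

lemma emeasure_le_suminf_of_approx_covers:
  assumes "A \<subseteq> N \<union> (\<Union>k. B k)" "N \<in> null_sets M"
    and "\<And>k e. 0 < e \<Longrightarrow> \<exists>U\<in>sets M. B k \<subseteq> U \<and> emeasure M U \<le> b k + ennreal e"
  shows "emeasure M A \<le> (\<Sum>k. b k)"
proof (rule ennreal_le_epsilon)
  fix e :: real
  assume "0 < e"
  then have "\<exists>U. U \<in> sets M \<and> B k \<subseteq> U \<and> emeasure M U \<le> b k + ennreal (e * (1/2)^Suc k)" for k
    using assms(3)[of "e * (1/2)^Suc k" k] by auto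
  then obtain U where U: "\<And>k. U k \<in> sets M" "\<And>k. B k \<subseteq> U k"
    "\<And>k. emeasure M (U k) \<le> b k + ennreal (e * (1/2)^Suc k)"
    by metis
  have "A \<subseteq> N \<union> (\<Union>k. U k)"
    using assms(1) U(2) by blast
  then have "emeasure M A \<le> emeasure M (N \<union> (\<Union>k. U k))"
    using assms(2) U(1) by (intro emeasure_mono) auto
  also have "\<dots> \<le> emeasure M N + emeasure M (\<Union>k. U k)"
    using assms(2) U(1) by (intro emeasure_subadditive) auto
  also have "\<dots> = emeasure M (\<Union>k. U k)"
    using assms(2) by (simp add: null_setsD1)
  also have "\<dots> \<le> (\<Sum>k. emeasure M (U k))"
    using U(1) by (intro emeasure_subadditive_countably) auto
  also have "\<dots> \<le> (\<Sum>k. b k + ennreal (e * (1/2)^Suc k))"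
    by (intro suminf_le summableI U(3))
  also have "\<dots> = (\<Sum>k. b k) + (\<Sum>k. ennreal (e * (1/2)^Suc k))"
    by (rule suminf_add[symmetric]) (auto intro: summableI)
  also have "\<dots> = (\<Sum>k. b k) + ennreal e"
    using \<open>0 < e\<close> by (simp only: suminf_ennreal_half_powers less_imp_le)
  finally show "emeasure M A \<le> (\<Sum>k. b k) + ennreal e" .
qed

lemma infdist_band_borel:
  assumes "closed A"
  shows "infdist_band A F a k \<in> sets borel"
proof -
  have "infdist_band A F a k = A \<inter> {x. a (Suc k) < infdist x F} \<inter> {x. infdist x F \<le> a k}"
    by (auto simp: infdist_band_def)
  also have "\<dots> \<in> sets borel"
    using assms by (intro sets.Int borel_closed borel_open open_Collect_less closed_Collect_le
        continuous_intros)
  finally show ?thesis .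
qed

lemma suminf_infdist_bands_le_nn_integral:
  assumes "antimono a" "\<And>k. infdist_band A F a k \<in> sets M"
  shows "(\<Sum>k. ennreal (a (Suc k)) * emeasure M (infdist_band A F a k))
           \<le> (\<integral>\<^sup>+ x \<in> A. ennreal (infdist x F) \<partial>M)"
proof -
  have "(\<Sum>k. ennreal (a (Suc k)) * emeasure M (infdist_band A F a k))
      = (\<integral>\<^sup>+ x. (\<Sum>k. ennreal (a (Suc k)) * indicator (infdist_band A F a k) x) \<partial>M)"
    using assms(2) by (simp add: nn_integral_suminf nn_integral_cmult_indicator)
  also have "\<dots> \<le> (\<integral>\<^sup>+ x \<in> A. ennreal (infdist x F) \<partial>M)"
  proof (rule nn_integral_mono)
    fix x
    show "(\<Sum>k. ennreal (a (Suc k)) * indicator (infdist_band A F a k) x)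
        \<le> ennreal (infdist x F) * indicator A x"
    proof (cases "\<exists>j. x \<in> infdist_band A F a j")
      case False
      then show ?thesis
        by simp
    next
      case True
      then obtain j where j: "x \<in> infdist_band A F a j"
        by blast
      have "(\<Sum>k. ennreal (a (Suc k)) * indicator (infdist_band A F a k) x)
          = (\<Sum>k\<in>{j}. ennreal (a (Suc k)) * indicator (infdist_band A F a k) x)"
        using infdist_band_unique[OF assms(1) j] by (intro suminf_finite) (auto split: split_indicator)
      also have "\<dots> \<le> ennreal (infdist x F) * indicator A x"
        using j by (auto simp: infdist_band_def intro: ennreal_leI)
      finally show ?thesis .
    qed
  qed
  finally show ?thesis .
qed

lemma emeasure_convex_Diff_le_frontier_integral:
  fixes X Y :: "'a::euclidean_space set"
  assumes "1 \<le> l" "convex X" "ball 0 (1/l) \<subseteq> X" "X \<subseteq> ball 0 l"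
    and "convex Y" "ball 0 (1/l) \<subseteq> Y"
  shows "emeasure lebesgue (X - Y) \<le> ennreal (2 * radial_shell_const TYPE('a) * l^2) *
    (\<integral>\<^sup>+ x \<in> frontier X. ennreal (infdist x Y) \<partial>hausdorff_measure (DIM('a) - 1))"
proof -
  let ?H = "hausdorff_measure (DIM('a) - 1) :: 'a measure"
  let ?K = "radial_shell_const TYPE('a)"
  let ?a = "\<lambda>k. l * (1/2)^k"
  let ?S = "infdist_band (frontier X) Y ?a"
  have "0 < l"
    using assms(1) by simp
  have S: "?S k \<in> sets ?H" for k
    using infdist_band_borel borel_subset_sets_hausdorff_measure by blast
  have "emeasure lebesgue (X - Y) \<le> (\<Sum>k. ennreal (?K * l * (l^2 * (1/2)^k)) * emeasure ?H (?S k))"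
  proof (rule emeasure_le_suminf_of_approx_covers)
    show "X - Y \<subseteq> frontier X \<union> (\<Union>k. radial_shell l (l^2 * (1/2)^k) (?S k))"
      by (rule convex_Diff_subset_radial_shells[OF assms])
    show "frontier X \<in> null_sets lebesgue"
      using negligible_convex_frontier[OF assms(2)] by (simp add: negligible_iff_null_sets)
    fix k and e :: real
    assume "0 < e"
    have "0 < l^2 * (1/2)^k"
      using \<open>0 < l\<close> by simp
    from radial_shell_measure_le_hausdorff[OF assms(1) this \<open>0 < e\<close>, of "?S k"]
    obtain U where U: "U \<in> sets borel" "radial_shell l (l^2 * (1/2)^k) (?S k) \<subseteq> U"
      "emeasure lborel U \<le> ennreal (?K * l * (l^2 * (1/2)^k)) *
         hausdorff_outer (DIM('a) - 1) (?S k) + ennreal e"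
      by blast
    then show "\<exists>U\<in>sets lebesgue. radial_shell l (l^2 * (1/2)^k) (?S k) \<subseteq> U \<and>
        emeasure lebesgue U \<le> ennreal (?K * l * (l^2 * (1/2)^k)) * emeasure ?H (?S k) + ennreal e"
      unfolding emeasure_hausdorff_measure[OF S] by (intro bexI[of _ U]) simp_all
  qed
  also have "\<dots> = ennreal (2 * ?K * l^2) * (\<Sum>k. ennreal (?a (Suc k)) * emeasure ?H (?S k))"
  proof -
    have "ennreal (?K * l * (l^2 * (1/2)^k)) = ennreal (2 * ?K * l^2) * ennreal (?a (Suc k))" for k
      using radial_shell_const_pos[where 'a='a] \<open>0 < l\<close>
      by (simp add: ennreal_mult[symmetric] power2_eq_square)
    then show ?thesis
      by (simp add: mult.assoc)
  qed
  also have "\<dots> \<le> ennreal (2 * ?K * l^2) * (\<integral>\<^sup>+ x \<in> frontier X. ennreal (infdist x Y) \<partial>?H)"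
    using \<open>0 < l\<close> S
    by (intro mult_left_mono suminf_infdist_bands_le_nn_integral)
       (auto intro!: antimonoI mult_left_mono power_decreasing)
  finally show ?thesis .
qed

theorem mainTheorem7:
  fixes l :: real
  assumes "l \<ge> 1"
  shows "\<exists>c>0. \<forall>X Y :: 'a::euclidean_space set.
           convex X \<longrightarrow> convex Y \<longrightarrow>
           emeasure lebesgue X = emeasure lebesgue Y \<longrightarrow>
           ball 0 (1/l) \<subseteq> X \<longrightarrow> X \<subseteq> ball 0 l \<longrightarrow>
           ball 0 (1/l) \<subseteq> Y \<longrightarrow> Y \<subseteq> ball 0 l \<longrightarrow>
           emeasure lebesgue ((X - Y) \<union> (Y - X))
             \<le> ennreal c * (\<integral>\<^sup>+ x \<in> frontier X. ennreal (infdist x Y)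
                              \<partial>hausdorff_measure (DIM('a) - 1))"
proof (intro exI[of _ "4 * radial_shell_const TYPE('a) * l^2"] conjI allI impI)
  show "0 < 4 * radial_shell_const TYPE('a) * l^2"
    using radial_shell_const_pos[where 'a='a] assms by simp
  fix X Y :: "'a set"
  assume X: "convex X" "ball 0 (1/l) \<subseteq> X" "X \<subseteq> ball 0 l"
    and Y: "convex Y" "ball 0 (1/l) \<subseteq> Y" "Y \<subseteq> ball 0 l"
    and vol: "emeasure lebesgue X = emeasure lebesgue Y"
  have "X \<in> fmeasurable lebesgue" "Y \<in> fmeasurable lebesgue"
    using X(1,3) Y(1,3) by (auto intro!: measurable_convex bounded_subset[OF bounded_ball])
  then have "emeasure lebesgue (X - Y) = emeasure lebesgue (Y - X)"
    using vol by (intro emeasure_Diff_swap) (auto simp: fmeasurable_def)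
  then have "emeasure lebesgue ((X - Y) \<union> (Y - X)) = 2 * emeasure lebesgue (X - Y)"
    using \<open>X \<in> fmeasurable lebesgue\<close> \<open>Y \<in> fmeasurable lebesgue\<close>
    by (subst plus_emeasure[symmetric]) (auto simp: mult_2)
  also have "\<dots> \<le> 2 * (ennreal (2 * radial_shell_const TYPE('a) * l^2) *
      (\<integral>\<^sup>+ x \<in> frontier X. ennreal (infdist x Y) \<partial>hausdorff_measure (DIM('a) - 1)))"
    by (intro mult_left_mono emeasure_convex_Diff_le_frontier_integral[OF assms X Y(1,2)]) auto
  also have "\<dots> = ennreal (4 * radial_shell_const TYPE('a) * l^2) *
      (\<integral>\<^sup>+ x \<in> frontier X. ennreal (infdist x Y) \<partial>hausdorff_measure (DIM('a) - 1))"
    using radial_shell_const_pos[where 'a='a]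
    by (simp add: ennreal_mult[symmetric] ennreal_numeral[symmetric] mult.assoc[symmetric]
        del: ennreal_numeral)
  finally show "emeasure lebesgue ((X - Y) \<union> (Y - X)) \<le> ennreal (4 * radial_shell_const TYPE('a) * l^2) *
      (\<integral>\<^sup>+ x \<in> frontier X. ennreal (infdist x Y) \<partial>hausdorff_measure (DIM('a) - 1))" .
qed

end
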